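(* Let $n\ge3$ and let $x$ be a vertex of the Mobius ladder $M_{2n}$. Assign to $x$ a label $\ell\in\{1,2,\dots,\lceil n/2\rceil\}$. Then for every vertex $v$ covered by $x$ there exists a vertex $u$, also covered by $x$, such that $d(u,v)=2$.
   Context: For $n\ge2$, the Mobius ladder $M_{2n}$ has vertex set $\{x_1,\dots,x_{2n}\}$ and edge set $\{\{x_i,x_{i+1}\}:1\le i\le 2n\}\cup\{\{x_i,x_{i+n}\}:1\le i\le n\}$, subscripts modulo $2n$. $d$ denotes graph distance. A vertex $x$ carrying label $\ell$ covers exactly the vertices at distance $\ell$ from $x$. *)

theory Defs
  imports Main
begin

text \<open>Mobius ladder M_{2n}: vertices are 0,...,2n-1 (vertex x_i of the paper is i-1,
  indices taken modulo 2n). Edges: {i, i+1 mod 2n} and {i, i+n mod 2n}.\<close>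

definition mob_vert :: "nat \<Rightarrow> nat set" where
  "mob_vert n = {..<2*n}"

definition mob_adj :: "nat \<Rightarrow> nat \<Rightarrow> nat \<Rightarrow> bool" where
  "mob_adj n i j \<longleftrightarrow> i < 2*n \<and> j < 2*n \<and>
     (j = (i + 1) mod (2*n) \<or> i = (j + 1) mod (2*n) \<or>
      j = (i + n) mod (2*n) \<or> i = (j + n) mod (2*n))"

fun mob_walk :: "nat \<Rightarrow> nat \<Rightarrow> nat \<Rightarrow> nat \<Rightarrow> bool" where
  "mob_walk n 0 u v = (u = v)"
| "mob_walk n (Suc k) u v = (\<exists>w. mob_adj n u w \<and> mob_walk n k w v)"

text \<open>Graph distance (the graph is connected, so the least exists for vertices).\<close>
definition mob_dist :: "nat \<Rightarrow> nat \<Rightarrow> nat \<Rightarrow> nat" where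
  "mob_dist n u v = (LEAST k. mob_walk n k u v)"

definition mob_covers :: "nat \<Rightarrow> nat \<Rightarrow> nat \<Rightarrow> nat \<Rightarrow> bool" where
  "mob_covers n x l v \<longleftrightarrow> v \<in> mob_vert n \<and> mob_dist n x v = l"

end

theory Submission
  imports Defs
begin

text \<open>Let r = (v - x) mod 2n be the offset from x to v along the rim. Walking along the rim
  takes r or 2n - r steps, crossing the spoke at x first and then walking along the rim takes
  1 + |r - n| steps; hence d(x,v) \<le> min(r, 2n - r, 1 + |r - n|). Equality holds because every
  edge changes the offset by 1, -1 or n, which changes this minimum by at most 1.
  Going from v across its spoke and then one rim step, to u = v + n - 1 if r \<le> n and to
  u = v + n + 1 if r > n, turns the offset from x into r + n - 1 resp. r - n + 1, where the
  minimum takes the same value, while the offset from u to v is n + 1 resp. n - 1, which is at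
  distance 2 once n \<ge> 3.\<close>

definition mob_offset :: "nat \<Rightarrow> nat \<Rightarrow> nat \<Rightarrow> int" where
  "mob_offset n u v = (int v - int u) mod (2 * int n)"

definition mob_offset_dist :: "int \<Rightarrow> int \<Rightarrow> int" where
  "mob_offset_dist N r = min (min r (2 * N - r)) (1 + \<bar>r - N\<bar>)"

lemma mod_eq_if_less_double:
  fixes a m :: int
  assumes "0 \<le> a" "a < 2 * m"
  shows "a mod m = (if a < m then a else a - m)"
proof (cases "a < m")
  case False
  have "a mod m = (a - m) mod m" by simp
  also have "\<dots> = a - m" using False assms by (intro mod_pos_pos_trivial) auto
  finally show ?thesis using False by simp
qed (use assms in simp)

lemma mob_rim_target_iff:
  assumes "u < 2 * n" "v < 2 * n"
  shows "(u + m) mod (2 * n) = v \<longleftrightarrow> int m mod (2 * int n) = mob_offset n u v"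
proof -
  have "(u + m) mod (2 * n) = v \<longleftrightarrow> int ((u + m) mod (2 * n)) = int v"
    by (rule of_nat_eq_iff [symmetric])
  also have "\<dots> \<longleftrightarrow> (int u + int m) mod (2 * int n) = int v mod (2 * int n)"
    using assms by (simp add: of_nat_mod)
  also have "\<dots> \<longleftrightarrow> int m mod (2 * int n) = mob_offset n u v"
    unfolding mob_offset_def by (simp add: mod_eq_dvd_iff algebra_simps)
  finally show ?thesis .
qed

lemma mob_offset_swap: "mob_offset n v u = (- mob_offset n u v) mod (2 * int n)"
  unfolding mob_offset_def by (simp add: mod_minus_eq)

lemma mob_offset_add: "mob_offset n u v = (mob_offset n u w + mob_offset n w v) mod (2 * int n)"
  unfolding mob_offset_def by (simp add: mod_simps)

lemma mob_adj_imp_offset: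
  assumes "mob_adj n u w"
  shows "mob_offset n u w \<in> {1, 2 * int n - 1, int n}"
proof -
  have u: "u < 2 * n" and w: "w < 2 * n" using assms by (auto simp: mob_adj_def)
  then have n: "int n \<ge> 1" by simp
  have "(u + 1) mod (2 * n) = w \<or> (w + 1) mod (2 * n) = u \<or>
      (u + n) mod (2 * n) = w \<or> (w + n) mod (2 * n) = u"
    using assms unfolding mob_adj_def by auto
  then have "mob_offset n u w = 1 mod (2 * int n) \<or> mob_offset n w u = 1 mod (2 * int n) \<or>
      mob_offset n u w = int n mod (2 * int n) \<or> mob_offset n w u = int n mod (2 * int n)"
    unfolding mob_rim_target_iff[OF u w] mob_rim_target_iff[OF w u] by auto
  moreover have "1 mod (2 * int n) = 1" "int n mod (2 * int n) = int n"
    "(- 1) mod (2 * int n) = 2 * int n - 1" "(- int n) mod (2 * int n) = int n"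
    using n by (simp_all add: zmod_zminus1_eq_if)
  ultimately show ?thesis
    using mob_offset_swap[of n u w] by auto
qed

lemma mob_offset_dist_step_le:
  assumes "0 \<le> r" "r < 2 * N" "s \<in> {1, 2 * N - 1, N}"
  shows "mob_offset_dist N ((s + r) mod (2 * N)) \<le> mob_offset_dist N r + 1"
  using assms mod_eq_if_less_double[of "s + r" "2 * N"] unfolding mob_offset_dist_def by auto

lemma mob_offset_dist_shift:
  assumes "3 \<le> N" "1 \<le> r" "r < 2 * N" "s = (if r \<le> N then N - 1 else N + 1)"
  shows "mob_offset_dist N ((r + s) mod (2 * N)) = mob_offset_dist N r"
    and "mob_offset_dist N ((- s) mod (2 * N)) = 2"
proof -
  have "(r + s) mod (2 * N) = (if r \<le> N then r + N - 1 else r - N + 1)"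
    using assms mod_eq_if_less_double[of "r + s" "2 * N"] by auto
  then show "mob_offset_dist N ((r + s) mod (2 * N)) = mob_offset_dist N r"
    using assms unfolding mob_offset_dist_def by auto
  have "(- s) mod (2 * N) = 2 * N - s"
    using assms by (simp add: zmod_zminus1_eq_if)
  then show "mob_offset_dist N ((- s) mod (2 * N)) = 2"
    using assms unfolding mob_offset_dist_def by auto
qed

lemma mob_walk_add:
  "mob_walk n (a + b) u v \<longleftrightarrow> (\<exists>w. mob_walk n a u w \<and> mob_walk n b w v)"
  by (induction a arbitrary: u) auto

lemma mob_offset_dist_le_walk_length:
  "mob_walk n k u v \<Longrightarrow> u < 2 * n \<Longrightarrow>
    mob_offset_dist (int n) (mob_offset n u v) \<le> int k"
proof (induction k arbitrary: u)
  case 0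
  then show ?case by (simp add: mob_offset_def mob_offset_dist_def)
next
  case (Suc k)
  then obtain w where uw: "mob_adj n u w" and wv: "mob_walk n k w v" by auto
  then have "w < 2 * n" by (simp add: mob_adj_def)
  then have r: "0 \<le> mob_offset n w v" "mob_offset n w v < 2 * int n"
    by (simp_all add: mob_offset_def)
  have "mob_offset_dist (int n) (mob_offset n u v)
      = mob_offset_dist (int n) ((mob_offset n u w + mob_offset n w v) mod (2 * int n))"
    by (simp flip: mob_offset_add)
  also have "\<dots> \<le> mob_offset_dist (int n) (mob_offset n w v) + 1"
    using r mob_adj_imp_offset[OF uw] by (rule mob_offset_dist_step_le)
  also have "\<dots> \<le> int (Suc k)"
    using Suc.IH[OF wv \<open>w < 2 * n\<close>] by simp
  finally show ?case .
qed

lemma mob_adj_rim: "i < 2 * n \<Longrightarrow> mob_adj n i ((i + 1) mod (2 * n))"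
  by (simp add: mob_adj_def)

lemma mob_adj_rim_back: "i < 2 * n \<Longrightarrow> mob_adj n ((i + 1) mod (2 * n)) i"
  by (simp add: mob_adj_def)

lemma mob_adj_spoke: "i < 2 * n \<Longrightarrow> mob_adj n i ((i + n) mod (2 * n))"
  by (simp add: mob_adj_def)

lemma mob_walk_rim_forward: "u < 2 * n \<Longrightarrow> mob_walk n m u ((u + m) mod (2 * n))"
proof (induction m)
  case (Suc m)
  have "mob_adj n ((u + m) mod (2 * n)) ((u + Suc m) mod (2 * n))"
    using mob_adj_rim[of "(u + m) mod (2 * n)" n] Suc.prems by (simp add: mod_simps)
  then show ?case
    using mob_walk_add[of n m 1] Suc by auto
qed simp

lemma mob_walk_rim_backward: "u < 2 * n \<Longrightarrow> mob_walk n m ((u + m) mod (2 * n)) u"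
proof (induction m)
  case (Suc m)
  have "mob_adj n ((u + Suc m) mod (2 * n)) ((u + m) mod (2 * n))"
    using mob_adj_rim_back[of "(u + m) mod (2 * n)" n] Suc.prems by (simp add: mod_simps)
  then show ?case
    using Suc by auto
qed simp

lemma mob_walk_forward_offset:
  assumes "u < 2 * n" "v < 2 * n" "int m mod (2 * int n) = mob_offset n u v"
  shows "mob_walk n m u v"
proof -
  have "(u + m) mod (2 * n) = v"
    using assms(3) by (simp only: mob_rim_target_iff[OF assms(1,2)])
  then show ?thesis using mob_walk_rim_forward[OF assms(1), of m] by (simp only:)
qed

lemma mob_walk_backward_offset:
  assumes "u < 2 * n" "v < 2 * n" "int m mod (2 * int n) = mob_offset n v u"
  shows "mob_walk n m u v"
proof -
  have "(v + m) mod (2 * n) = u"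
    using assms(3) by (simp only: mob_rim_target_iff[OF assms(2,1)])
  then show ?thesis using mob_walk_rim_backward[OF assms(2), of m] by (simp only:)
qed

lemma mob_walk_via_spoke:
  assumes u: "u < 2 * n" and v: "v < 2 * n"
  shows "mob_walk n (Suc (nat \<bar>mob_offset n u v - int n\<bar>)) u v"
proof -
  define N where "N = int n"
  define r where "r = mob_offset n u v"
  define w where "w = (u + n) mod (2 * n)"
  have w: "w < 2 * n" using u by (simp add: w_def)
  have "int n mod (2 * int n) = mob_offset n u w"
    using mob_rim_target_iff[OF u w, of n] by (simp add: w_def)
  then have uw: "mob_offset n u w = N" using u by (simp add: N_def)
  have "mob_walk n (nat \<bar>r - N\<bar>) w v"
  proof (cases "N \<le> r")
    case True
    have "mob_offset n w v = ((- N) mod (2 * N) + r) mod (2 * N)"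
      unfolding mob_offset_add[of n w v u] mob_offset_swap[of n w u] uw
      by (simp add: r_def N_def)
    also have "\<dots> = (r - N) mod (2 * N)" by (simp add: mod_simps)
    finally show ?thesis
      using True by (intro mob_walk_forward_offset[OF w v]) (simp add: N_def)
  next
    case False
    have "mob_offset n v w = ((- r) mod (2 * N) + N) mod (2 * N)"
      unfolding mob_offset_add[of n v w u] mob_offset_swap[of n v u] uw
      by (simp add: r_def N_def)
    also have "\<dots> = (N - r) mod (2 * N)" by (simp add: mod_simps)
    finally show ?thesis
      using False by (intro mob_walk_backward_offset[OF w v]) (simp add: N_def)
  qed
  moreover have "mob_adj n u w" using mob_adj_spoke[OF u] by (simp add: w_def)
  ultimately show ?thesis by (auto simp: r_def N_def)
qed

lemma mob_walk_of_offset_dist: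
  assumes u: "u < 2 * n" and v: "v < 2 * n"
  shows "mob_walk n (nat (mob_offset_dist (int n) (mob_offset n u v))) u v"
proof -
  define N where "N = int n"
  define r where "r = mob_offset n u v"
  have r: "0 \<le> r" "r < 2 * N" using u by (simp_all add: r_def N_def mob_offset_def)
  consider "mob_offset_dist N r = r" | "mob_offset_dist N r = 2 * N - r"
    | "mob_offset_dist N r = 1 + \<bar>r - N\<bar>"
    unfolding mob_offset_dist_def by linarith
  then show ?thesis
  proof cases
    case 1
    then show ?thesis
      using r by (intro mob_walk_forward_offset[OF u v]) (simp add: r_def N_def)
  next
    case 2
    have "mob_offset n v u = (- r) mod (2 * N)"
      using mob_offset_swap[of n v u] by (simp add: r_def N_def)
    with 2 r show ?thesis
      by (intro mob_walk_backward_offset[OF u v]) (simp add: r_def N_def)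
  next
    case 3
    then show ?thesis
      using mob_walk_via_spoke[OF u v] by (simp add: r_def N_def nat_add_distrib)
  qed
qed

lemma mob_dist_eq_offset_dist:
  assumes "u < 2 * n" "v < 2 * n"
  shows "mob_dist n u v = nat (mob_offset_dist (int n) (mob_offset n u v))"
  unfolding mob_dist_def
proof (rule Least_equality)
  show "mob_walk n (nat (mob_offset_dist (int n) (mob_offset n u v))) u v"
    using assms by (rule mob_walk_of_offset_dist)
next
  fix k assume "mob_walk n k u v"
  from mob_offset_dist_le_walk_length[OF this assms(1)]
  show "nat (mob_offset_dist (int n) (mob_offset n u v)) \<le> k" by simp
qed

lemma mob_exists_equidistant_at_distance_two:
  assumes "3 \<le> n" "x < 2 * n" "v < 2 * n" "x \<noteq> v"
  shows "\<exists>u < 2 * n. mob_dist n x u = mob_dist n x v \<and> mob_dist n u v = 2"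
proof -
  define N where "N = int n"
  define r where "r = mob_offset n x v"
  define s where "s = (if r \<le> N then N - 1 else N + 1)"
  define u where "u = (v + nat s) mod (2 * n)"
  have u: "u < 2 * n" using assms by (simp add: u_def)
  have r: "0 \<le> r" "r < 2 * N" using assms by (simp_all add: r_def N_def mob_offset_def)
  moreover have "r \<noteq> 0"
    using mob_rim_target_iff[OF assms(2,3), of 0] assms(2,4) by (simp add: r_def)
  ultimately have r1: "1 \<le> r" by simp
  have "int (nat s) mod (2 * N) = mob_offset n v u"
    using mob_rim_target_iff[OF assms(3) u, of "nat s"] by (simp add: u_def N_def)
  moreover have "0 \<le> s" "s < 2 * N" using assms(1) by (simp_all add: s_def N_def)
  ultimately have vu: "mob_offset n v u = s" by simp
  have "mob_offset n x u = (r + s) mod (2 * N)"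
    using mob_offset_add[of n x u v] vu by (simp add: r_def N_def)
  moreover have "mob_offset n u v = (- s) mod (2 * N)"
    using mob_offset_swap[of n u v] vu by (simp add: N_def)
  ultimately show ?thesis
    using mob_offset_dist_shift[of N r s] assms r r1 u
    by (auto simp: mob_dist_eq_offset_dist s_def N_def r_def)
qed

theorem lemma3p5:
  fixes n x l v :: nat
  assumes "n \<ge> 3"
    and "x \<in> mob_vert n"
    and "1 \<le> l" and "l \<le> (n + 1) div 2"
    and "mob_covers n x l v"
  shows "\<exists>u. mob_covers n x l u \<and> mob_dist n u v = 2"
proof -
  have x: "x < 2 * n" using assms(2) by (simp add: mob_vert_def)
  have v: "v < 2 * n" and xv: "mob_dist n x v = l"
    using assms(5) by (simp_all add: mob_covers_def mob_vert_def)
  have "mob_dist n x x = 0"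
    by (simp add: mob_dist_def)
  with xv assms(3) have "x \<noteq> v" by auto
  then obtain u where "u < 2 * n" "mob_dist n x u = l" "mob_dist n u v = 2"
    using mob_exists_equidistant_at_distance_two[OF assms(1) x v] xv by auto
  then show ?thesis by (auto simp: mob_covers_def mob_vert_def)
qed

end
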